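(* Let $(\Omega,\mathcal{H},\mathbb{P})$ be a probability space with a filtration $\mathbb{U}=(\mathcal{U}_t)_{t\ge0}$, and let $(D_t)_{t\ge0}$ be a continuous $\mathbb{U}$-adapted real process (the income of an energy-efficient building) such that all conditional expectations below are well defined and finite. Let $R>0$, $\bar r>0$, $\alpha>\alpha^\star>0$, let $\mathfrak{c}:(\mathbb{R}_+)^2\to\mathbb{R}_+^*$ be continuous, let $\mathfrak{p}$ be a fixed energy source and $\mathfrak{f}(\cdot,\mathfrak{p}):\mathbb{R}_+\to\mathbb{R}_+^*$ differentiable, and let $\delta:\mathbb{R}_+\to\mathbb{R}_+$ be a deterministic $\mathcal{C}^1$ function for which there exist $0\le t_\circ<t_\star$ with $\delta$ constant on $[0,t_\circ]$ and constant on $[t_\star,\infty)$. Define $$C_t:=R\,\mathbb{E}\Big[\int_t^{\infty}e^{-\bar r(u-t)}D_u\,\mathrm{d}u\,\Big|\,\mathcal{U}_t\Big],$$ $$\mathcal{C}_{t,\delta}:=R\operatorname*{ess\,sup}_{\theta\ge t}\mathbb{E}\Big[\int_t^{\theta}\big[D_u-(\alpha-\alpha^\star)\mathfrak{f}(\delta_u,\mathfrak{p})\big]e^{-\bar r(u-t)}\mathrm{d}u-\mathfrak{c}(\alpha,\alpha^\star)e^{-\bar r(\theta-t)}+\int_\theta^\infty e^{-\bar r(u-t)}D_u\,\mathrm{d}u\,\Big|\,\mathcal{U}_t\Big],$$ the essential supremum being over (deterministic) times $\theta\in[t,\infty)$. Assume that (1) $\delta$ is non-decreasing on $\mathbb{R}_+$,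 and (2) $\mathfrak{f}(\cdot,\mathfrak{p})$ is non-decreasing on $\mathbb{R}_+$. Then for every $t\ge0$, $$\mathcal{C}_{t,\delta}=C_t-R\,X_{t,\delta},\qquad X_{t,\delta}:=\mathfrak{c}(\alpha,\alpha^\star)e^{-\bar r(\mathfrak{t}-t)}+(\alpha-\alpha^\star)\int_t^{\mathfrak{t}}\mathfrak{f}(\delta_u,\mathfrak{p})e^{-\bar r(u-t)}\,\mathrm{d}u,$$ where the optimal renovation date $\mathfrak{t}\in[t,+\infty]$ is given by: $\mathfrak{t}=t$ if $\mathfrak{f}(\delta_\theta,\mathfrak{p})-\bar r\frac{\mathfrak{c}(\alpha,\alpha^\star)}{\alpha-\alpha^\star}>0$ for all $\theta\in[t,\infty)$; $\mathfrak{t}=+\infty$ if $\mathfrak{f}(\delta_\theta,\mathfrak{p})-\bar r\frac{\mathfrak{c}(\alpha,\alpha^\star)}{\alpha-\alpha^\star}<0$ for all $\theta\in[t,\infty)$; and $\mathfrak{t}=\theta^\star$ where $\theta^\star$ is the unique solution in $[t,\infty)$ of $\mathfrak{f}(\delta_\theta,\mathfrak{p})=\bar r\frac{\mathfrak{c}(\alpha,\alpha^\star)}{\alpha-\alpha^\star}$ (when such a unique solution exists). For $\mathfrak{t}=+\infty$, $e^{-\bar r(\mathfrak{t}-t)}:=0$ and the integral is over $[t,\infty)$.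
   Context: $\delta_t$ is the (deterministic) carbon price at time $t$, $\mathfrak{f}(\delta,\mathfrak{p})$ the energy price of source $\mathfrak{p}$ at carbon price $\delta$, $\alpha$ and $\alpha^\star$ the energy consumption per square meter of the building and of an efficient building, $\mathfrak{c}(\alpha,\alpha^\star)$ the renovation cost, $R$ the surface and $\bar r$ the discount rate. *)

theory Defs
  imports "HOL-Probability.Probability"
begin

definition is_ess_sup_fam :: "'a measure \<Rightarrow> ('a \<Rightarrow> real) set \<Rightarrow> ('a \<Rightarrow> real) \<Rightarrow> bool" where
  "is_ess_sup_fam M S Z \<longleftrightarrow>
     Z \<in> borel_measurable M \<and>
     (\<forall>X\<in>S. AE \<omega> in M. X \<omega> \<le> Z \<omega>) \<and>
     (\<forall>Z'\<in>borel_measurable M. (\<forall>X\<in>S. AE \<omega> in M. X \<omega> \<le> Z' \<omega>) \<longrightarrow> (AE \<omega> in M. Z \<omega> \<le> Z' \<omega>))"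

definition value_C :: "'a measure \<Rightarrow> (real \<Rightarrow> 'a measure) \<Rightarrow> (real \<Rightarrow> 'a \<Rightarrow> real) \<Rightarrow> real \<Rightarrow> real \<Rightarrow> real \<Rightarrow> 'a \<Rightarrow> real" where
  "value_C M F D R r t = (\<lambda>\<omega>. R * real_cond_exp M (F t)
      (\<lambda>\<omega>'. LBINT u:{t..}. exp (- r * (u - t)) * D u \<omega>') \<omega>)"

text \<open>The conditional expectation inside the essential supremum, for a renovation at the
  deterministic time theta; fp is u \<mapsto> f(delta_u, p), c0 = c(alpha, alpha*).\<close>
definition renov_payoff :: "'a measure \<Rightarrow> (real \<Rightarrow> 'a measure) \<Rightarrow> (real \<Rightarrow> 'a \<Rightarrow> real) \<Rightarrow> real \<Rightarrow> real
     \<Rightarrow> (real \<Rightarrow> real) \<Rightarrow> real \<Rightarrow> real \<Rightarrow> real \<Rightarrow> 'a \<Rightarrow> real" where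
  "renov_payoff M F D r a fp c0 t \<theta> = real_cond_exp M (F t)
      (\<lambda>\<omega>. (LBINT u:{t..\<theta>}. (D u \<omega> - a * fp u) * exp (- r * (u - t)))
            - c0 * exp (- r * (\<theta> - t))
            + (LBINT u:{\<theta>..}. exp (- r * (u - t)) * D u \<omega>))"

end

theory Submission
  imports Defs "HOL-Real_Asymp.Real_Asymp"
begin

(*
  For a deterministic renovation date \<theta> \<ge> t the payoff splits pathwise into the discounted
  income from t onwards minus the deterministic cost
    X(\<theta>) = c e^{-r(\<theta>-t)} + (\<alpha> - \<alpha>\<^sup>\<star>) \<integral>_t^\<theta> f(\<delta>_u) e^{-r(u-t)} du,
  so its conditional expectation is C_t/R - X(\<theta>) and the essential supremum over \<theta> is
  C_t/R - inf X. Since X'(\<theta>) = (\<alpha> - \<alpha>\<^sup>\<star>) e^{-r(\<theta>-t)} (f(\<delta>_\<theta>) - K) with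
  K = r c/(\<alpha> - \<alpha>\<^sup>\<star>) and \<theta> \<mapsto> f(\<delta>_\<theta>) is non-decreasing, X attains its infimum at t if
  f(\<delta>_\<theta>) \<ge> K throughout, at the crossing date if f(\<delta>_\<theta>) = K, and is approached as
  \<theta> \<rightarrow> \<infinity> if f(\<delta>_\<theta>) \<le> K throughout.
*)

lemma set_integrable_bounded_mult_exp_decay:
  fixes g :: "real \<Rightarrow> real"
  assumes r: "r > 0" and g: "continuous_on {t..} g" and bound: "\<And>u. u \<ge> t \<Longrightarrow> \<bar>g u\<bar> \<le> B"
  shows "set_integrable lborel {t..} (\<lambda>u. g u * exp (- r * (u - t)))"
proof (rule set_integrable_bound)
  have B: "B \<ge> 0" using bound[of t] by auto
  have "(\<lambda>u. (B * exp (r * t)) * exp (- r * u)) integrable_on {t..}"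
    using integrable_on_exp_minus_to_infinity[OF r] by (rule integrable_on_mult_right)
  then have "(\<lambda>u. B * exp (- r * (u - t))) integrable_on {t..}"
    by (simp add: algebra_simps mult_exp_exp)
  with B have "(\<lambda>u. B * exp (- r * (u - t))) absolutely_integrable_on {t..}"
    by (intro nonnegative_absolutely_integrable_1) auto
  then show "set_integrable lborel {t..} (\<lambda>u. B * exp (- r * (u - t)))"
    unfolding set_integrable_def
    by (subst (asm) integrable_completion) (auto intro!: borel_measurable_continuous_on_indicator continuous_intros)
  show "set_borel_measurable lborel {t..} (\<lambda>u. g u * exp (- r * (u - t)))"
    unfolding set_borel_measurable_def measurable_lborel2
    by (intro borel_measurable_continuous_on_indicator continuous_intros g) auto
  show "AE u in lborel. u \<in> {t..} \<longrightarrow> norm (g u * exp (- r * (u - t))) \<le> norm (B * exp (- r * (u - t)))"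
    using bound B by (auto simp: abs_mult intro!: mult_right_mono)
qed

lemma price_path_continuous_mono_integrable:
  fixes g \<delta> :: "real \<Rightarrow> real"
  assumes g_diff: "g differentiable_on {0..}" and g_mono: "mono_on {0..} g"
    and g_pos: "\<And>x. x \<ge> 0 \<Longrightarrow> g x > 0"
    and \<delta>_deriv: "\<And>x. x \<ge> 0 \<Longrightarrow> (\<delta> has_real_derivative \<delta>' x) (at x within {0..})"
    and \<delta>_nonneg: "\<And>x. x \<ge> 0 \<Longrightarrow> \<delta> x \<ge> 0" and \<delta>_mono: "mono_on {0..} \<delta>"
    and \<delta>_const: "\<forall>x\<ge>ts. \<delta> x = \<delta> ts"
    and r: "r > 0" and t: "t \<ge> 0"
  shows "continuous_on {t..} (\<lambda>u. g (\<delta> u))" and "mono_on {t..} (\<lambda>u. g (\<delta> u))"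
    and "set_integrable lborel {t..} (\<lambda>u. g (\<delta> u) * exp (- r * (u - t)))"
proof -
  have cont: "continuous_on {0..} (\<lambda>u. g (\<delta> u))"
    using \<delta>_nonneg by (intro continuous_on_compose2[OF differentiable_imp_continuous_on[OF g_diff]]
        DERIV_continuous_on[OF \<delta>_deriv]) auto
  have mono: "mono_on {0..} (\<lambda>u. g (\<delta> u))"
    using monotone_on_o[OF g_mono \<delta>_mono] \<delta>_nonneg by (auto simp: o_def)
  have bound: "\<bar>g (\<delta> u)\<bar> \<le> g (\<delta> ts)" if "u \<ge> t" for u
  proof -
    have u: "u \<ge> 0" using t that by simp
    then have "g (\<delta> u) \<le> g (\<delta> (max u ts))" using mono_onD[OF mono] by simp
    also have "\<dots> = g (\<delta> ts)" by (simp add: \<delta>_const[rule_format, of "max u ts"])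
    finally show ?thesis using g_pos[OF \<delta>_nonneg[OF u]] by simp
  qed
  show cont_t: "continuous_on {t..} (\<lambda>u. g (\<delta> u))"
    by (rule continuous_on_subset[OF cont]) (use t in auto)
  show "mono_on {t..} (\<lambda>u. g (\<delta> u))"
    by (rule mono_on_subset[OF mono]) (use t in auto)
  show "set_integrable lborel {t..} (\<lambda>u. g (\<delta> u) * exp (- r * (u - t)))"
    by (rule set_integrable_bounded_mult_exp_decay[OF r cont_t bound])
qed

definition renovation_cost :: "real \<Rightarrow> real \<Rightarrow> real \<Rightarrow> (real \<Rightarrow> real) \<Rightarrow> real \<Rightarrow> real \<Rightarrow> real" where
  "renovation_cost r a c0 fp t \<theta> =
     c0 * exp (- r * (\<theta> - t)) + a * (LBINT u:{t..\<theta>}. fp u * exp (- r * (u - t)))"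

lemma renovation_cost_diff_has_integral:
  fixes fp :: "real \<Rightarrow> real"
  assumes fp: "continuous_on {t..} fp" and le: "t \<le> \<theta>'" "\<theta>' \<le> \<theta>"
  shows "((\<lambda>u. (a * fp u - r * c0) * exp (- r * (u - t))) has_integral
           renovation_cost r a c0 fp t \<theta> - renovation_cost r a c0 fp t \<theta>') {\<theta>'..\<theta>}"
proof -
  define h where "h u = fp u * exp (- r * (u - t))" for u
  have h: "continuous_on {t..} h" unfolding h_def by (intro continuous_intros fp)
  have h_Icc: "continuous_on {\<theta>1..\<theta>2} h" if "t \<le> \<theta>1" for \<theta>1 \<theta>2
    using h by (rule continuous_on_subset) (use that in auto)
  have LBINT_eq: "(LBINT u:{t..T}. h u) = integral {t..T} h" for T
    using h_Icc[of t T] unfolding set_integrable_def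
    by (intro set_borel_integral_eq_integral(2)[unfolded set_integrable_def] borel_integrable_compact) auto
  have combine: "integral {t..\<theta>'} h + integral {\<theta>'..\<theta>} h = integral {t..\<theta>} h"
    by (intro Henstock_Kurzweil_Integration.integral_combine[OF le] integrable_continuous_interval h_Icc) simp
  have "((\<lambda>u. a * h u) has_integral a * integral {\<theta>'..\<theta>} h) {\<theta>'..\<theta>}"
    using le h_Icc[of \<theta>' \<theta>] by (intro has_integral_mult_right integrable_integral integrable_continuous_interval) auto
  moreover have "((\<lambda>u. c0 * (- r * exp (- r * (u - t)))) has_integral
      c0 * (exp (- r * (\<theta> - t)) - exp (- r * (\<theta>' - t)))) {\<theta>'..\<theta>}"
    by (intro has_integral_mult_right fundamental_theorem_of_calculus le)
       (auto simp: has_real_derivative_iff_has_vector_derivative[symmetric] intro!: derivative_eq_intros)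
  ultimately have "((\<lambda>u. a * h u + c0 * (- r * exp (- r * (u - t)))) has_integral
      a * integral {\<theta>'..\<theta>} h + c0 * (exp (- r * (\<theta> - t)) - exp (- r * (\<theta>' - t)))) {\<theta>'..\<theta>}"
    by (rule has_integral_add)
  then show ?thesis
    unfolding renovation_cost_def h_def[symmetric] LBINT_eq combine[symmetric]
    by (simp add: h_def algebra_simps)
qed

lemma renovation_cost_mono:
  fixes fp :: "real \<Rightarrow> real"
  assumes fp: "continuous_on {t..} fp" and a: "a > 0" and le: "t \<le> \<theta>'" "\<theta>' \<le> \<theta>"
    and above: "\<And>u. u \<in> {\<theta>'..\<theta>} \<Longrightarrow> r * c0 / a \<le> fp u"
  shows "renovation_cost r a c0 fp t \<theta>' \<le> renovation_cost r a c0 fp t \<theta>"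
proof -
  have "0 \<le> renovation_cost r a c0 fp t \<theta> - renovation_cost r a c0 fp t \<theta>'"
  proof (rule has_integral_nonneg[OF renovation_cost_diff_has_integral[OF fp le]])
    fix u assume "u \<in> {\<theta>'..\<theta>}"
    with above a have "r * c0 \<le> a * fp u" by (simp add: pos_divide_le_eq mult.commute)
    then show "0 \<le> (a * fp u - r * c0) * exp (- r * (u - t))" by simp
  qed
  then show ?thesis by simp
qed

lemma renovation_cost_antimono:
  fixes fp :: "real \<Rightarrow> real"
  assumes fp: "continuous_on {t..} fp" and a: "a > 0" and le: "t \<le> \<theta>'" "\<theta>' \<le> \<theta>"
    and below: "\<And>u. u \<in> {\<theta>'..\<theta>} \<Longrightarrow> fp u \<le> r * c0 / a"
  shows "renovation_cost r a c0 fp t \<theta> \<le> renovation_cost r a c0 fp t \<theta>'"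
proof -
  have "renovation_cost r a c0 fp t \<theta> - renovation_cost r a c0 fp t \<theta>' \<le> 0"
  proof (rule has_integral_le[OF renovation_cost_diff_has_integral[OF fp le] has_integral_0])
    fix u assume "u \<in> {\<theta>'..\<theta>}"
    with below a have "a * fp u \<le> r * c0" by (simp add: pos_le_divide_eq mult.commute)
    then show "(a * fp u - r * c0) * exp (- r * (u - t)) \<le> 0" by (simp add: mult_nonpos_nonneg)
  qed
  then show ?thesis by simp
qed

lemma renovation_cost_tendsto_at_top:
  fixes fp :: "real \<Rightarrow> real"
  assumes r: "r > 0" and int: "set_integrable lborel {t..} (\<lambda>u. fp u * exp (- r * (u - t)))"
  shows "(renovation_cost r a c0 fp t \<longlongrightarrow> a * (LBINT u:{t..}. fp u * exp (- r * (u - t)))) at_top"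
proof -
  have "((\<lambda>\<theta>. exp (- r * (\<theta> - t))) \<longlongrightarrow> 0) at_top" using r by real_asymp
  moreover have "((\<lambda>\<theta>. LBINT u:{t..\<theta>}. fp u * exp (- r * (u - t)))
      \<longlongrightarrow> (LBINT u:{t..}. fp u * exp (- r * (u - t)))) at_top"
    using int by (rule tendsto_set_lebesgue_integral_at_top[rotated]) simp
  ultimately have "((\<lambda>\<theta>. c0 * exp (- r * (\<theta> - t)) + a * (LBINT u:{t..\<theta>}. fp u * exp (- r * (u - t))))
      \<longlongrightarrow> c0 * 0 + a * (LBINT u:{t..}. fp u * exp (- r * (u - t)))) at_top"
    by (intro tendsto_intros)
  then show ?thesis unfolding renovation_cost_def[abs_def] by simp
qed

lemma renovation_cost_ge_limit:
  fixes fp :: "real \<Rightarrow> real"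
  assumes fp: "continuous_on {t..} fp" and int: "set_integrable lborel {t..} (\<lambda>u. fp u * exp (- r * (u - t)))"
    and a: "a > 0" and r: "r > 0" and below: "\<And>u. u \<ge> t \<Longrightarrow> fp u \<le> r * c0 / a" and \<theta>: "t \<le> \<theta>"
  shows "a * (LBINT u:{t..}. fp u * exp (- r * (u - t))) \<le> renovation_cost r a c0 fp t \<theta>"
proof (rule tendsto_upperbound[OF renovation_cost_tendsto_at_top[OF r int]])
  show "\<forall>\<^sub>F \<theta>' in at_top. renovation_cost r a c0 fp t \<theta>' \<le> renovation_cost r a c0 fp t \<theta>"
    unfolding eventually_at_top_linorder
    by (intro exI[of _ \<theta>] allI impI renovation_cost_antimono[OF fp a \<theta>]) (use \<theta> below in auto)
qed simp

lemma renovation_cost_min_at_crossing: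
  fixes fp :: "real \<Rightarrow> real"
  assumes fp: "continuous_on {t..} fp" and mono: "mono_on {t..} fp" and a: "a > 0"
    and crossing: "t \<le> \<theta>s" "fp \<theta>s = r * c0 / a" and \<theta>: "t \<le> \<theta>"
  shows "renovation_cost r a c0 fp t \<theta>s \<le> renovation_cost r a c0 fp t \<theta>"
proof (cases "\<theta>s \<le> \<theta>")
  case True
  then show ?thesis
    using crossing mono_onD[OF mono, of \<theta>s] by (intro renovation_cost_mono[OF fp a]) auto
next
  case False
  then show ?thesis
    using crossing \<theta> mono_onD[OF mono, of _ \<theta>s] by (intro renovation_cost_antimono[OF fp a]) auto
qed

lemma continuous_on_atLeast_crossing_cases:
  fixes g :: "real \<Rightarrow> real"
  assumes g: "continuous_on {t..} g"
  obtains "\<forall>\<theta>\<ge>t. K < g \<theta>" | \<theta>s where "t \<le> \<theta>s" "g \<theta>s = K" | "\<forall>\<theta>\<ge>t. g \<theta> < K"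
proof (cases "\<exists>\<theta>\<ge>t. g \<theta> = K")
  case False
  have "(\<forall>\<theta>\<ge>t. K < g \<theta>) \<or> (\<forall>\<theta>\<ge>t. g \<theta> < K)"
  proof (rule ccontr)
    assume "\<not> ?thesis"
    then obtain \<theta>1 \<theta>2 where "t \<le> \<theta>1" "g \<theta>1 \<le> K" "t \<le> \<theta>2" "K \<le> g \<theta>2"
      by (auto simp: not_less)
    then have "K \<in> g ` {t..}"
      using connected_contains_Icc[OF connected_continuous_image[OF g connected_Ici], of "g \<theta>1" "g \<theta>2"]
      by auto
    with False show False by auto
  qed
  then show ?thesis using that(1,3) by blast
qed (use that(2) in blast)

lemma is_ess_sup_fam_unique:
  assumes "is_ess_sup_fam M S Z" and "is_ess_sup_fam M S Z'"
  shows "AE \<omega> in M. Z \<omega> = Z' \<omega>"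
proof -
  have "AE \<omega> in M. Z \<omega> \<le> Z' \<omega>" and "AE \<omega> in M. Z' \<omega> \<le> Z \<omega>"
    using assms unfolding is_ess_sup_fam_def by auto
  then show ?thesis by eventually_elim simp
qed

lemma is_ess_sup_fam_diff_inf:
  fixes P :: "'b \<Rightarrow> 'a \<Rightarrow> real" and g :: "'b \<Rightarrow> real"
  assumes Y: "Y \<in> borel_measurable M"
    and P: "\<And>\<theta>. \<theta> \<in> T \<Longrightarrow> AE \<omega> in M. P \<theta> \<omega> = Y \<omega> - g \<theta>"
    and lower: "\<And>\<theta>. \<theta> \<in> T \<Longrightarrow> m \<le> g \<theta>"
    and approx: "\<And>n. \<theta>n n \<in> T" "(\<lambda>n. g (\<theta>n n)) \<longlonglongrightarrow> m"
  shows "is_ess_sup_fam M (P ` T) (\<lambda>\<omega>. Y \<omega> - m)"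
  unfolding is_ess_sup_fam_def
proof (intro conjI ballI impI)
  show "(\<lambda>\<omega>. Y \<omega> - m) \<in> borel_measurable M" using Y by simp
next
  fix X assume "X \<in> P ` T"
  then obtain \<theta> where \<theta>: "\<theta> \<in> T" "X = P \<theta>" by blast
  from P[OF \<theta>(1)] show "AE \<omega> in M. X \<omega> \<le> Y \<omega> - m"
    by eventually_elim (use \<theta> lower in auto)
next
  fix Z' assume bound: "\<forall>X\<in>P ` T. AE \<omega> in M. X \<omega> \<le> Z' \<omega>"
  have "AE \<omega> in M. Y \<omega> - g (\<theta>n n) \<le> Z' \<omega>" for n
    using bound approx(1)[of n] P[OF approx(1)[of n]] by (auto elim: AE_mp)
  then have "AE \<omega> in M. \<forall>n. Y \<omega> - g (\<theta>n n) \<le> Z' \<omega>" by (simp add: AE_all_countable)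
  then show "AE \<omega> in M. Y \<omega> - m \<le> Z' \<omega>"
    by eventually_elim (rule LIMSEQ_le_const2[OF tendsto_diff[OF tendsto_const approx(2)]], auto)
qed

lemma payoff_integral_split:
  fixes d fp :: "real \<Rightarrow> real"
  assumes d: "set_integrable lborel {t..} (\<lambda>u. exp (- r * (u - t)) * d u)"
    and fp: "set_integrable lborel {t..\<theta>} (\<lambda>u. fp u * exp (- r * (u - t)))" and \<theta>: "t \<le> \<theta>"
  shows "(LBINT u:{t..\<theta>}. (d u - a * fp u) * exp (- r * (u - t))) - c0 * exp (- r * (\<theta> - t))
           + (LBINT u:{\<theta>..}. exp (- r * (u - t)) * d u)
         = (LBINT u:{t..}. exp (- r * (u - t)) * d u) - renovation_cost r a c0 fp t \<theta>"
proof -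
  have d_Icc: "set_integrable lborel {t..\<theta>} (\<lambda>u. exp (- r * (u - t)) * d u)"
    and d_Ici: "set_integrable lborel {\<theta>..} (\<lambda>u. exp (- r * (u - t)) * d u)"
    by (rule set_integrable_subset[OF d]; use \<theta> in auto)+
  have "(LBINT u:{t..\<theta>}. (d u - a * fp u) * exp (- r * (u - t)))
      = (LBINT u:{t..\<theta>}. exp (- r * (u - t)) * d u) - a * (LBINT u:{t..\<theta>}. fp u * exp (- r * (u - t)))"
    using d_Icc fp by (simp add: algebra_simps set_integral_diff set_integral_mult_right set_integrable_mult_right)
  moreover have "(LBINT u:{t..}. exp (- r * (u - t)) * d u)
      = (LBINT u:{t..\<theta>}. exp (- r * (u - t)) * d u) + (LBINT u:{\<theta>..}. exp (- r * (u - t)) * d u)"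
  proof -
    have "{t..} = {t..\<theta>} \<union> {\<theta>..}" using \<theta> by auto
    moreover have "AE u in lborel. \<not> (u \<in> {t..\<theta>} \<and> u \<in> {\<theta>..})"
      using AE_lborel_singleton[of \<theta>] by eventually_elim auto
    ultimately show ?thesis using d_Icc d_Ici by (simp add: set_integral_Un_AE)
  qed
  ultimately show ?thesis unfolding renovation_cost_def by simp
qed

lemma renov_payoff_eq_cond_exp_diff:
  fixes M :: "'a measure" and F :: "real \<Rightarrow> 'a measure" and D :: "real \<Rightarrow> 'a \<Rightarrow> real"
  assumes "prob_space M" and "subalgebra M (F t)"
    and D: "\<And>\<omega>. \<omega> \<in> space M \<Longrightarrow> set_integrable lborel {t..} (\<lambda>u. exp (- r * (u - t)) * D u \<omega>)"
    and Y: "integrable M (\<lambda>\<omega>. LBINT u:{t..}. exp (- r * (u - t)) * D u \<omega>)"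
    and fp: "set_integrable lborel {t..\<theta>} (\<lambda>u. fp u * exp (- r * (u - t)))" and \<theta>: "t \<le> \<theta>"
  shows "AE \<omega> in M. renov_payoff M F D r a fp c0 t \<theta> \<omega> =
     real_cond_exp M (F t) (\<lambda>\<omega>. LBINT u:{t..}. exp (- r * (u - t)) * D u \<omega>) \<omega>
     - renovation_cost r a c0 fp t \<theta>"
proof -
  interpret prob_space M by fact
  interpret finite_measure_subalgebra M "F t" by unfold_locales fact
  let ?Y = "\<lambda>\<omega>. LBINT u:{t..}. exp (- r * (u - t)) * D u \<omega>"
  let ?k = "renovation_cost r a c0 fp t \<theta>"
  let ?G = "\<lambda>\<omega>. (LBINT u:{t..\<theta>}. (D u \<omega> - a * fp u) * exp (- r * (u - t))) - c0 * exp (- r * (\<theta> - t))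
            + (LBINT u:{\<theta>..}. exp (- r * (u - t)) * D u \<omega>)"
  have G: "?G \<omega> = ?Y \<omega> - ?k" if "\<omega> \<in> space M" for \<omega>
    using payoff_integral_split[OF D[OF that] fp \<theta>] .
  have Y_meas: "?Y \<in> borel_measurable M" using Y by (rule borel_measurable_integrable)
  then have "?G \<in> borel_measurable M" by (subst measurable_cong[OF G]) auto
  then have "AE \<omega> in M. real_cond_exp M (F t) ?G \<omega> = real_cond_exp M (F t) (\<lambda>\<omega>. ?Y \<omega> - ?k) \<omega>"
    using G Y_meas by (intro real_cond_exp_cong) auto
  moreover have "AE \<omega> in M. real_cond_exp M (F t) (\<lambda>\<omega>. ?Y \<omega> - ?k) \<omega> = real_cond_exp M (F t) ?Y \<omega> - real_cond_exp M (F t) (\<lambda>_. ?k) \<omega>"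
    using Y by (intro real_cond_exp_diff) auto
  moreover have "AE \<omega> in M. real_cond_exp M (F t) (\<lambda>_. ?k) \<omega> = ?k"
    by (intro real_cond_exp_F_meas) auto
  ultimately show ?thesis unfolding renov_payoff_def by eventually_elim simp
qed

locale renovation_problem =
  fixes M :: "'a measure" and F :: "real \<Rightarrow> 'a measure" and D :: "real \<Rightarrow> 'a \<Rightarrow> real"
    and r a c0 t :: real and fp :: "real \<Rightarrow> real"
  assumes prob: "prob_space M" and subalg: "subalgebra M (F t)"
    and D_path: "\<And>\<omega>. \<omega> \<in> space M \<Longrightarrow> set_integrable lborel {t..} (\<lambda>u. exp (- r * (u - t)) * D u \<omega>)"
    and D_int: "integrable M (\<lambda>\<omega>. LBINT u:{t..}. exp (- r * (u - t)) * D u \<omega>)"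
    and r_pos: "r > 0" and a_pos: "a > 0"
    and fp_cont: "continuous_on {t..} fp" and fp_mono: "mono_on {t..} fp"
    and fp_int: "set_integrable lborel {t..} (\<lambda>u. fp u * exp (- r * (u - t)))"
begin

abbreviation payoffs :: "('a \<Rightarrow> real) set" where
  "payoffs \<equiv> (\<lambda>\<theta>. renov_payoff M F D r a fp c0 t \<theta>) ` {t..}"

abbreviation income_value :: "'a \<Rightarrow> real" where
  "income_value \<equiv> real_cond_exp M (F t) (\<lambda>\<omega>. LBINT u:{t..}. exp (- r * (u - t)) * D u \<omega>)"

abbreviation X :: "real \<Rightarrow> real" where
  "X \<equiv> renovation_cost r a c0 fp t"

lemma is_ess_sup_payoffs_if_inf:
  assumes lower: "\<And>\<theta>. \<theta> \<in> {t..} \<Longrightarrow> m \<le> X \<theta>"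
    and approx: "\<And>n. \<theta>n n \<in> {t..}" "(\<lambda>n. X (\<theta>n n)) \<longlonglongrightarrow> m"
  shows "is_ess_sup_fam M payoffs (\<lambda>\<omega>. income_value \<omega> - m)"
proof (rule is_ess_sup_fam_diff_inf[OF borel_measurable_cond_exp2 _ lower approx])
  fix \<theta> assume "\<theta> \<in> {t..}"
  then show "AE \<omega> in M. renov_payoff M F D r a fp c0 t \<theta> \<omega> = income_value \<omega> - X \<theta>"
    by (intro renov_payoff_eq_cond_exp_diff prob subalg D_path D_int set_integrable_subset[OF fp_int]) auto
qed

lemma is_ess_sup_payoffs_start:
  assumes "\<forall>\<theta>\<ge>t. r * c0 / a \<le> fp \<theta>"
  shows "is_ess_sup_fam M payoffs (\<lambda>\<omega>. income_value \<omega> - X t)"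
proof (rule is_ess_sup_payoffs_if_inf[where \<theta>n="\<lambda>_. t"])
  show "\<theta> \<in> {t..} \<Longrightarrow> X t \<le> X \<theta>" for \<theta>
    by (rule renovation_cost_mono[OF fp_cont a_pos]) (use assms in auto)
qed simp_all

lemma is_ess_sup_payoffs_crossing:
  assumes "t \<le> \<theta>s" "fp \<theta>s = r * c0 / a"
  shows "is_ess_sup_fam M payoffs (\<lambda>\<omega>. income_value \<omega> - X \<theta>s)"
proof (rule is_ess_sup_payoffs_if_inf[where \<theta>n="\<lambda>_. \<theta>s"])
  show "\<theta> \<in> {t..} \<Longrightarrow> X \<theta>s \<le> X \<theta>" for \<theta>
    by (rule renovation_cost_min_at_crossing[OF fp_cont fp_mono a_pos]) (use assms in auto)
qed (use assms in simp_all)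

lemma is_ess_sup_payoffs_never:
  assumes "\<forall>\<theta>\<ge>t. fp \<theta> \<le> r * c0 / a"
  shows "is_ess_sup_fam M payoffs (\<lambda>\<omega>. income_value \<omega> - a * (LBINT u:{t..}. fp u * exp (- r * (u - t))))"
proof (rule is_ess_sup_payoffs_if_inf[where \<theta>n="\<lambda>n. t + real n"])
  show "\<theta> \<in> {t..} \<Longrightarrow> a * (LBINT u:{t..}. fp u * exp (- r * (u - t))) \<le> X \<theta>" for \<theta>
    by (rule renovation_cost_ge_limit[OF fp_cont fp_int a_pos r_pos]) (use assms in auto)
  show "(\<lambda>n. X (t + real n)) \<longlonglongrightarrow> a * (LBINT u:{t..}. fp u * exp (- r * (u - t)))"
    by (rule filterlim_compose[OF renovation_cost_tendsto_at_top[OF r_pos fp_int]])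
      (intro filterlim_tendsto_add_at_top[OF tendsto_const filterlim_real_sequentially])
qed simp

lemma ess_sup_payoffs_exists: "\<exists>Z. is_ess_sup_fam M payoffs Z"
proof (rule continuous_on_atLeast_crossing_cases[OF fp_cont, of "r * c0 / a"])
  assume "\<forall>\<theta>\<ge>t. r * c0 / a < fp \<theta>"
  then show ?thesis using is_ess_sup_payoffs_start less_imp_le by blast
next
  fix \<theta>s assume "t \<le> \<theta>s" "fp \<theta>s = r * c0 / a"
  then show ?thesis using is_ess_sup_payoffs_crossing by blast
next
  assume "\<forall>\<theta>\<ge>t. fp \<theta> < r * c0 / a"
  then show ?thesis using is_ess_sup_payoffs_never less_imp_le by blast
qed

end

theorem theorem1:
  fixes M :: "'a measure" and F :: "real \<Rightarrow> 'a measure"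
    and D :: "real \<Rightarrow> 'a \<Rightarrow> real"
    and R rbar \<alpha> \<alpha>s :: real
    and c :: "real \<Rightarrow> real \<Rightarrow> real"
    and f :: "real \<Rightarrow> 'e \<Rightarrow> real" and p :: 'e
    and \<delta> :: "real \<Rightarrow> real"
  assumes prob: "prob_space M"
    and filt: "filtration (space M) F"
    and subalg: "\<And>t. subalgebra M (F t)"
    and D_adapted: "\<And>t. t \<ge> 0 \<Longrightarrow> D t \<in> borel_measurable (F t)"
    and D_cont: "\<And>\<omega>. \<omega> \<in> space M \<Longrightarrow> continuous_on {0..} (\<lambda>u. D u \<omega>)"
    and D_int_path: "\<And>\<omega> t. \<omega> \<in> space M \<Longrightarrow> t \<ge> 0 \<Longrightarrow>
                        set_integrable lborel {t..} (\<lambda>u. exp (- rbar * (u - t)) * D u \<omega>)"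
    and D_int: "\<And>t. t \<ge> 0 \<Longrightarrow>
                   integrable M (\<lambda>\<omega>. LBINT u:{t..}. exp (- rbar * (u - t)) * D u \<omega>)"
    and R_pos: "R > 0" and r_pos: "rbar > 0"
    and alpha: "\<alpha> > \<alpha>s" "\<alpha>s > 0"
    and c_cont: "continuous_on ({0..} \<times> {0..}) (\<lambda>(x, y). c x y)"
    and c_pos: "\<And>x y. x \<ge> 0 \<Longrightarrow> y \<ge> 0 \<Longrightarrow> c x y > 0"
    and f_diff: "\<And>x. x \<ge> 0 \<Longrightarrow> (\<lambda>z. f z p) differentiable (at x within {0..})"
    and f_pos: "\<And>x. x \<ge> 0 \<Longrightarrow> f x p > 0"
    and \<delta>_C1: "\<exists>\<delta>'. continuous_on {0..} \<delta>' \<and>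
                  (\<forall>x\<ge>0. (\<delta> has_real_derivative \<delta>' x) (at x within {0..}))"
    and \<delta>_nonneg: "\<And>x. x \<ge> 0 \<Longrightarrow> \<delta> x \<ge> 0"
    and \<delta>_const: "\<exists>t0 ts. 0 \<le> t0 \<and> t0 < ts \<and> (\<forall>x\<in>{0..t0}. \<delta> x = \<delta> 0)
                        \<and> (\<forall>x\<ge>ts. \<delta> x = \<delta> ts)"
    and \<delta>_mono: "mono_on {0..} \<delta>"
    and f_mono: "mono_on {0..} (\<lambda>x. f x p)"
    and t_nonneg: "t \<ge> 0"
  defines "K \<equiv> rbar * c \<alpha> \<alpha>s / (\<alpha> - \<alpha>s)"
    and "S \<equiv> {renov_payoff M F D rbar (\<alpha> - \<alpha>s) (\<lambda>u. f (\<delta> u) p) (c \<alpha> \<alpha>s) t \<theta> | \<theta>. \<theta> \<ge> t}"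
    and "Xfin \<equiv> (\<lambda>T. c \<alpha> \<alpha>s * exp (- rbar * (T - t))
                    + (\<alpha> - \<alpha>s) * (LBINT u:{t..T}. f (\<delta> u) p * exp (- rbar * (u - t))))"
    and "Xinf \<equiv> (\<alpha> - \<alpha>s) * (LBINT u:{t..}. f (\<delta> u) p * exp (- rbar * (u - t)))"
    and "Ct \<equiv> value_C M F D R rbar t"
  shows "(\<exists>Z. is_ess_sup_fam M S Z)
     \<and> ((\<forall>\<theta>\<ge>t. f (\<delta> \<theta>) p - K > 0) \<longrightarrow>
          (\<forall>Z. is_ess_sup_fam M S Z \<longrightarrow> (AE \<omega> in M. R * Z \<omega> = Ct \<omega> - R * Xfin t)))
     \<and> ((\<forall>\<theta>\<ge>t. f (\<delta> \<theta>) p - K < 0) \<longrightarrow>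
          (\<forall>Z. is_ess_sup_fam M S Z \<longrightarrow> (AE \<omega> in M. R * Z \<omega> = Ct \<omega> - R * Xinf)))
     \<and> (\<forall>\<theta>s. \<theta>s \<ge> t \<and> f (\<delta> \<theta>s) p = K \<and> (\<forall>\<theta>\<ge>t. f (\<delta> \<theta>) p = K \<longrightarrow> \<theta> = \<theta>s) \<longrightarrow>
          (\<forall>Z. is_ess_sup_fam M S Z \<longrightarrow> (AE \<omega> in M. R * Z \<omega> = Ct \<omega> - R * Xfin \<theta>s)))"
proof -
  \<comment> \<open>Only deterministic dates compete.\<close>
  obtain \<delta>' where \<delta>': "\<forall>x\<ge>0. (\<delta> has_real_derivative \<delta>' x) (at x within {0..})" using \<delta>_C1 by blast
  obtain ts where \<delta>_ts: "\<forall>x\<ge>ts. \<delta> x = \<delta> ts" using \<delta>_const by blast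
  have "(\<lambda>z. f z p) differentiable_on {0..}" using f_diff by (simp add: differentiable_on_def)
  note fp = price_path_continuous_mono_integrable[OF this f_mono f_pos \<delta>'[rule_format] \<delta>_nonneg \<delta>_mono \<delta>_ts
      r_pos t_nonneg]
  have "\<alpha> - \<alpha>s > 0" using alpha by simp
  interpret renovation_problem M F D rbar "\<alpha> - \<alpha>s" "c \<alpha> \<alpha>s" t "\<lambda>u. f (\<delta> u) p"
    using renovation_problem.intro[OF prob subalg D_int_path[OF _ t_nonneg] D_int[OF t_nonneg] r_pos
        \<open>\<alpha> - \<alpha>s > 0\<close> fp] .
  have S_eq: "S = payoffs" unfolding S_def by auto
  have ess_sup_ae_eq: "AE \<omega> in M. R * Z \<omega> = Ct \<omega> - R * m"
    if "is_ess_sup_fam M payoffs (\<lambda>\<omega>. income_value \<omega> - m)" "is_ess_sup_fam M payoffs Z" for Z m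
    using is_ess_sup_fam_unique[OF that(2,1)] unfolding Ct_def value_C_def
    by eventually_elim (simp add: right_diff_distrib)
  have Xfin_eq: "Xfin = X" unfolding Xfin_def renovation_cost_def by simp
  show ?thesis
    unfolding S_eq Xinf_def Xfin_eq
  proof (intro conjI allI impI ess_sup_payoffs_exists)
    fix Z \<theta>s assume Z: "is_ess_sup_fam M payoffs Z"
    show "AE \<omega> in M. R * Z \<omega> = Ct \<omega> - R * X t" if "\<forall>\<theta>\<ge>t. f (\<delta> \<theta>) p - K > 0"
      using that by (intro ess_sup_ae_eq[OF is_ess_sup_payoffs_start Z]) (auto simp: K_def)
    show "AE \<omega> in M. R * Z \<omega> = Ct \<omega> - R * ((\<alpha> - \<alpha>s) * (LBINT u:{t..}. f (\<delta> u) p * exp (- rbar * (u - t))))"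
      if "\<forall>\<theta>\<ge>t. f (\<delta> \<theta>) p - K < 0"
      using that by (intro ess_sup_ae_eq[OF is_ess_sup_payoffs_never Z]) (auto simp: K_def)
    show "AE \<omega> in M. R * Z \<omega> = Ct \<omega> - R * X \<theta>s"
      if "\<theta>s \<ge> t \<and> f (\<delta> \<theta>s) p = K \<and> (\<forall>\<theta>\<ge>t. f (\<delta> \<theta>) p = K \<longrightarrow> \<theta> = \<theta>s)"
      using that by (intro ess_sup_ae_eq[OF is_ess_sup_payoffs_crossing Z]) (auto simp: K_def)
  qed
qed

end
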